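(* Let $0<w_1<w_2<\dots<w_n$ be integers with $\sum_{i=1}^n w_i<2^n-1$, such that $w([i])\ge 2^i-1$ for all $i\in[n-1]$. Let $\Delta\le 2^n/(3n^2)$ satisfy $d\le\Delta$. Then $w_i\le 2^{i-1}+\Delta$ for all $i\in[n]$.
   Context: Write $[i]=\{1,\dots,i\}$ and $w(S)=\sum_{j\in S}w_j$ for $S\subseteq[n]$. The frequency is $f_t=\#\{S\subseteq[n]:w(S)=t\}$. The parameter is $d=\sum_{0\le t<2^n}\max\{0,f_t-1\}$; under $\sum_i w_i<2^n-1$ this equals $\#\{0\le t<2^n:f_t=0\}$. *)

theory Defs
  imports Complex_Main
begin

text \<open>Weights are indexed by 1..n: w :: nat => int.\<close>

definition wsum :: "(nat \<Rightarrow> int) \<Rightarrow> nat set \<Rightarrow> int" where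
  "wsum w S = (\<Sum>j\<in>S. w j)"

definition freq :: "(nat \<Rightarrow> int) \<Rightarrow> nat \<Rightarrow> int \<Rightarrow> nat" where
  "freq w n t = card {S. S \<subseteq> {1..n} \<and> wsum w S = t}"

definition dpar :: "(nat \<Rightarrow> int) \<Rightarrow> nat \<Rightarrow> nat" where
  "dpar w n = (\<Sum>t\<in>{0..<(2::nat)^n}. max 0 (freq w n (int t) - 1))"

end

theory Submission
  imports Defs
begin

text \<open>Let \<open>H\<close> be the set of subset sums of \<open>w\<^sub>1, \<dots>, w\<^sub>n\<close>. They all lie in
  \<open>[0, 2^n)\<close> and the \<open>2^n\<close> subsets are distributed over the values in \<open>H\<close>, so
  \<open>d = 2^n - |H|\<close>. A subset sum below \<open>w\<^sub>i\<close> uses only \<open>w\<^sub>1, \<dots>, w\<^sub>i\<^sub>-\<^sub>1\<close>, hence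
  \<open>|H| \<le> 2^(i-1) + (2^n - w\<^sub>i)\<close>, that is \<open>w\<^sub>i \<le> d + 2^(i-1)\<close>.\<close>

definition subset_sums :: "(nat \<Rightarrow> int) \<Rightarrow> nat \<Rightarrow> int set" where
  "subset_sums w n = wsum w ` Pow {1..n}"

lemma card_subset_sums_le: "card (subset_sums w n) \<le> 2 ^ n"
  unfolding subset_sums_def
  using card_image_le[of "Pow {1..n}" "wsum w"] by (simp add: card_Pow)

lemma freq_eq_card_fibre: "freq w n t = card {S \<in> Pow {1..n}. wsum w S = t}"
  unfolding freq_def by (simp add: Pow_def)

lemma freq_pos_iff: "0 < freq w n t \<longleftrightarrow> t \<in> subset_sums w n"
  unfolding freq_eq_card_fibre subset_sums_def by (auto simp: card_gt_0_iff)

lemma sum_freq: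
  assumes "subset_sums w n \<subseteq> T" "finite T"
  shows "(\<Sum>t\<in>T. freq w n t) = 2 ^ n"
proof -
  have "(\<Sum>t\<in>T. freq w n t) = (\<Sum>t\<in>T. \<Sum>S\<in>{S \<in> Pow {1..n}. wsum w S = t}. 1)"
    by (simp add: freq_eq_card_fibre)
  also have "\<dots> = (\<Sum>S\<in>Pow {1..n}. 1)"
    using assms by (intro sum.group) (auto simp: subset_sums_def)
  finally show ?thesis by (simp add: card_Pow)
qed

lemma dpar_add_card_subset_sums:
  assumes "subset_sums w n \<subseteq> {0..<2 ^ n}"
  shows "dpar w n + card (subset_sums w n) = 2 ^ n"
proof -
  let ?T = "{0..<2 ^ n :: int}" and ?H = "subset_sums w n"
  have "dpar w n = (\<Sum>t\<in>int ` {0..<2 ^ n}. freq w n t - 1)"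
    unfolding dpar_def by (simp add: sum.reindex)
  also have "\<dots> = (\<Sum>t\<in>?T. freq w n t - 1)"
    by (simp add: image_int_atLeastLessThan)
  finally have dpar_eq: "dpar w n = (\<Sum>t\<in>?T. freq w n t - 1)" .
  have card_eq: "card ?H = (\<Sum>t\<in>?T. if t \<in> ?H then 1 else 0)"
    using assms by (simp add: sum.If_cases Int_absorb1)
  have "dpar w n + card ?H = (\<Sum>t\<in>?T. freq w n t)"
    unfolding dpar_eq card_eq sum.distrib[symmetric]
    by (intro sum.cong refl) (use freq_pos_iff in fastforce)
  also have "\<dots> = 2 ^ n"
    using assms by (intro sum_freq) auto
  finally show ?thesis .
qed

lemma subset_sums_subset_atLeastAtMost:
  assumes "\<And>j. j \<in> {1..n} \<Longrightarrow> 0 \<le> w j"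
  shows "subset_sums w n \<subseteq> {0..wsum w {1..n}}"
proof
  fix t assume "t \<in> subset_sums w n"
  then obtain S where S: "S \<subseteq> {1..n}" and t: "t = wsum w S"
    by (auto simp: subset_sums_def)
  have "0 \<le> wsum w S" "wsum w S \<le> wsum w {1..n}"
    unfolding wsum_def using S assms by (auto intro!: sum_nonneg sum_mono2)
  then show "t \<in> {0..wsum w {1..n}}" by (simp add: t)
qed

lemma subset_sums_subset_Un:
  assumes nonneg: "\<And>j. j \<in> {1..n} \<Longrightarrow> 0 \<le> w j"
    and ge: "\<And>j. j \<in> {i..n} \<Longrightarrow> w i \<le> w j"
  shows "subset_sums w n \<subseteq> subset_sums w (i - 1) \<union> {w i..}"
proof
  fix t assume "t \<in> subset_sums w n"
  then obtain S where S: "S \<subseteq> {1..n}" and t: "t = wsum w S"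
    by (auto simp: subset_sums_def)
  show "t \<in> subset_sums w (i - 1) \<union> {w i..}"
  proof (cases "S \<subseteq> {1..i - 1}")
    case True
    then show ?thesis by (simp add: subset_sums_def t)
  next
    case False
    then obtain j where j: "j \<in> S" "j \<notin> {1..i - 1}" by blast
    with S have "j \<in> {i..n}" by auto
    then have "w i \<le> w j" by (rule ge)
    also have "w j \<le> wsum w S"
      unfolding wsum_def using S j nonneg
      by (intro member_le_sum) (auto intro: finite_subset)
    finally show ?thesis by (simp add: t)
  qed
qed

lemma weight_le_dpar_add_power:
  assumes nonneg: "\<And>j. j \<in> {1..n} \<Longrightarrow> 0 \<le> w j"
    and ge: "\<And>j. j \<in> {i..n} \<Longrightarrow> w i \<le> w j"
    and bounded: "subset_sums w n \<subseteq> {0..<2 ^ n}"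
    and i: "i \<in> {1..n}"
  shows "w i \<le> int (dpar w n) + 2 ^ (i - 1)"
proof -
  let ?H = "subset_sums w n"
  have "w i \<in> ?H"
    unfolding subset_sums_def by (rule image_eqI[of _ _ "{i}"]) (use i in \<open>auto simp: wsum_def\<close>)
  with bounded have wi_less: "w i < 2 ^ n" by auto
  have "?H \<subseteq> subset_sums w (i - 1) \<union> {w i..}"
    using nonneg ge by (rule subset_sums_subset_Un)
  with bounded have "?H \<subseteq> subset_sums w (i - 1) \<union> {w i..<2 ^ n}"
    by fastforce
  then have "card ?H \<le> card (subset_sums w (i - 1) \<union> {w i..<2 ^ n})"
    by (intro card_mono) (simp_all add: subset_sums_def)
  also have "\<dots> \<le> card (subset_sums w (i - 1)) + card {w i..<2 ^ n}"
    by (rule card_Un_le)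
  also have "\<dots> \<le> 2 ^ (i - 1) + nat (2 ^ n - w i)"
    using card_subset_sums_le[of w "i - 1"] by simp
  finally have "int (card ?H) \<le> int (2 ^ (i - 1) + nat (2 ^ n - w i))"
    by (rule of_nat_mono)
  then have "int (card ?H) \<le> 2 ^ (i - 1) + (2 ^ n - w i)"
    using wi_less by simp
  moreover have "int (dpar w n) + int (card ?H) = 2 ^ n"
    using dpar_add_card_subset_sums[OF bounded] by (simp flip: of_nat_add)
  ultimately show ?thesis by linarith
qed

theorem lemma3p3:
  fixes w :: "nat \<Rightarrow> int" and n :: nat and \<Delta> :: real
  assumes pos: "\<And>i. 1 \<le> i \<Longrightarrow> i \<le> n \<Longrightarrow> 0 < w i"
    and incr: "\<And>i. 1 \<le> i \<Longrightarrow> i < n \<Longrightarrow> w i < w (i + 1)"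
    and total: "wsum w {1..n} < 2 ^ n - 1"
    and prefix: "\<And>i. 1 \<le> i \<Longrightarrow> i \<le> n - 1 \<Longrightarrow> wsum w {1..i} \<ge> 2 ^ i - 1"
    and Delta: "\<Delta> \<le> 2 ^ n / (3 * real n ^ 2)"
    and dle: "real (dpar w n) \<le> \<Delta>"
  shows "\<forall>i\<in>{1..n}. real_of_int (w i) \<le> 2 ^ (i - 1) + \<Delta>"
proof
  fix i assume i: "i \<in> {1..n}"
  have nonneg: "0 \<le> w j" if "j \<in> {1..n}" for j
    using pos that by (simp add: less_imp_le)
  have ge: "w i \<le> w j" if "j \<in> {i..n}" for j
  proof (rule lift_Suc_mono_le_ivl[of "{1..<n}" w])
    show "w k \<le> w (Suc k)" if "k \<in> {1..<n}" for k
      using incr[of k] that by simp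
  qed (use i that in auto)
  have bounded: "subset_sums w n \<subseteq> {0..<2 ^ n}"
    using subset_sums_subset_atLeastAtMost[of n w] nonneg total by auto
  from nonneg ge bounded i have "w i \<le> int (dpar w n) + 2 ^ (i - 1)"
    by (rule weight_le_dpar_add_power)
  then have "real_of_int (w i) \<le> real_of_int (int (dpar w n) + 2 ^ (i - 1))"
    by (simp only: of_int_le_iff)
  with dle show "real_of_int (w i) \<le> 2 ^ (i - 1) + \<Delta>"
    by simp
qed

end
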